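(* For every integer $k\ge2$ and every $x\in\mathbb{R}^n$, $$\sqrt[2k-2]{H_{2k-2}(x)}\le\sqrt[2k]{H_{2k}(x)}.$$
   Context: For $m\in\mathbb{N}$, $H_m(x)=h_m(x)/\binom{n+m-1}{m}$ where $h_m(x)=\sum_{\alpha\in\mathbb{N}_0^n,|\alpha|=m}x^\alpha$ is the complete homogeneous symmetric polynomial of degree $m$ in $n$ variables (for even $m$ it is nonnegative on $\mathbb{R}^n$). *)

theory Defs
  imports "HOL-Analysis.Analysis"
begin

definition complete_hom :: "nat \<Rightarrow> real ^ 'n \<Rightarrow> real" where
  "complete_hom m x = (\<Sum>\<alpha> \<in> {\<alpha> :: 'n \<Rightarrow> nat. (\<Sum>i\<in>UNIV. \<alpha> i) = m}. \<Prod>i\<in>UNIV. (x $ i) ^ (\<alpha> i))"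

definition H_norm :: "nat \<Rightarrow> real ^ 'n \<Rightarrow> real" where
  "H_norm m x = complete_hom m x / real ((CARD('n) + m - 1) choose m)"

end

theory Submission
  imports Defs
begin

text \<open>
  H_m(x) is the m-th moment of the linear form w \<bullet> x for w uniformly distributed on the
  standard simplex. We realise it by a positive functional L with L(t^m) = H_m(x), built by
  stick-breaking one variable at a time: if L serves the n variables in I, then
  g \<mapsto> \<integral>_0^1 n s^(n-1) L(t \<mapsto> g(x_a + s (t - x_a))) ds serves I \<union> {a}, because the Beta
  integrals reproduce the recurrence h_m(x_a, x_I) = \<Sum>_j x_a^(m-j) h_j(x_I).
  Positivity of L on (c t^j + d t^(j+2))^2 gives H_(2j+2)^2 \<le> H_(2j) H_(2j+4), so j \<mapsto> H_(2j)
  is log-convex with H_0 = 1, and hence H_(2j)^(1/(2j)) is nondecreasing.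
\<close>

lemma has_integral_beta_nat:
  "((\<lambda>s::real. s ^ p * (1 - s) ^ q) has_integral (fact p * fact q / fact (p + q + 1))) {0..1}"
proof -
  have "((\<lambda>s. s powr (real p + 1 - 1) * (1 - s) powr (real q + 1 - 1))
          has_integral Beta (real p + 1) (real q + 1)) {0<..<1}"
    using has_integral_Beta_real[of "real p + 1" "real q + 1"] by (simp add: has_integral_Icc_iff_Ioo)
  also have "?this \<longleftrightarrow> ((\<lambda>s. s ^ p * (1 - s) ^ q) has_integral Beta (real p + 1) (real q + 1)) {0<..<1}"
    by (rule has_integral_cong) (simp add: powr_realpow)
  also have "Beta (real p + 1) (real q + 1) = fact p * fact q / fact (p + q + 1)"
    using Gamma_fact[of p, where 'a=real] Gamma_fact[of q, where 'a=real]
      Gamma_fact[of "p + q + 1", where 'a=real]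
    by (simp add: Beta_def add_ac del: fact_Suc)
  finally show ?thesis by (simp add: has_integral_Icc_iff_Ioo)
qed

lemma affine_power_expansion:
  fixes a s t :: real
  assumes "i \<le> N"
  shows "(a + s * (t - a)) ^ i = (\<Sum>j\<le>N. real (i choose j) * s ^ j * ((1 - s) * a) ^ (i - j) * t ^ j)"
proof -
  have "(a + s * (t - a)) ^ i = (s * t + (1 - s) * a) ^ i"
    by (simp add: algebra_simps)
  also have "\<dots> = (\<Sum>j\<le>i. real (i choose j) * (s * t) ^ j * ((1 - s) * a) ^ (i - j))"
    by (rule binomial_ring)
  also have "\<dots> = (\<Sum>j\<le>N. real (i choose j) * (s * t) ^ j * ((1 - s) * a) ^ (i - j))"
    by (rule sum.mono_neutral_left) (use assms in auto)
  finally show ?thesis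
    by (simp add: power_mult_distrib ac_simps)
qed

lemma choose_beta_identity:
  assumes "j \<le> m"
  shows "real (m choose j) * real (Suc l) * (fact (l + j) * fact (m - j) / fact (Suc l + m))
       = real ((l + j) choose j) / real ((Suc l + m) choose m)"
proof -
  have "real (m choose j) = fact m / (fact j * fact (m - j))"
    using binomial_fact[OF assms] by simp
  moreover have "real ((l + j) choose j) = fact (l + j) / (fact j * fact l)"
    using binomial_fact[of j "l + j"] by simp
  moreover have "real ((Suc l + m) choose m) = fact (Suc l + m) / (fact m * (real (Suc l) * fact l))"
    using binomial_fact[of m "Suc l + m"] by simp
  ultimately show ?thesis
    by (simp only:) (simp add: field_simps del: fact_Suc)
qed

lemma nonneg_quadratic_form_imp_square_le:
  fixes A B C :: real
  assumes nonneg: "\<And>c d. 0 \<le> c\<^sup>2 * A + 2 * c * d * B + d\<^sup>2 * C"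
  shows "B\<^sup>2 \<le> A * C"
proof (cases "A = 0")
  case True
  show ?thesis
  proof (rule ccontr)
    assume "\<not> B\<^sup>2 \<le> A * C"
    then have "B \<noteq> 0"
      using True by simp
    have "0 \<le> (- (C + 1) / (2 * B))\<^sup>2 * A + 2 * (- (C + 1) / (2 * B)) * 1 * B + 1\<^sup>2 * C"
      by (rule nonneg)
    also have "\<dots> = -1"
      using True \<open>B \<noteq> 0\<close> by (simp add: field_simps)
    finally show False
      by simp
  qed
next
  case False
  then have "0 < A"
    using nonneg[of 1 0] by simp
  have "0 \<le> (- B)\<^sup>2 * A + 2 * (- B) * A * B + A\<^sup>2 * C"
    by (rule nonneg)
  also have "\<dots> = A * (A * C - B\<^sup>2)"
    by (simp add: power2_eq_square algebra_simps)
  finally show ?thesis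
    using \<open>0 < A\<close> by (simp add: zero_le_mult_iff)
qed

lemma log_convex_power_le:
  fixes a :: "nat \<Rightarrow> real"
  assumes a0: "a 0 = 1" and nonneg: "\<And>j. 0 \<le> a j"
    and log_convex: "\<And>j. (a (j + 1))\<^sup>2 \<le> a j * a (j + 2)"
  shows "a j ^ (j + 1) \<le> a (j + 1) ^ j"
proof (induction j)
  case 0
  then show ?case
    using a0 by simp
next
  case (Suc j)
  show ?case
  proof (cases "a (j + 1) = 0")
    case True
    then show ?thesis
      using nonneg by simp
  next
    case False
    then have pos: "0 < a (j + 1)"
      using nonneg[of "j + 1"] by simp
    have "j + (j + 2) = 2 * (j + 1)"
      by simp
    then have "a (j + 1) ^ j * a (j + 1) ^ (j + 2) = ((a (j + 1))\<^sup>2) ^ (j + 1)"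
      by (simp only: power_add[symmetric] power_mult)
    also have "\<dots> \<le> (a j * a (j + 2)) ^ (j + 1)"
      by (rule power_mono[OF log_convex]) simp
    also have "\<dots> = a j ^ (j + 1) * a (j + 2) ^ (j + 1)"
      by (simp add: power_mult_distrib)
    also have "\<dots> \<le> a (j + 1) ^ j * a (j + 2) ^ (j + 1)"
      by (rule mult_right_mono[OF Suc.IH]) (simp add: nonneg)
    finally have "a (j + 1) ^ (j + 2) \<le> a (j + 2) ^ (j + 1)"
      using pos by (simp add: mult_le_cancel_left_pos)
    then show ?thesis
      by (simp add: numeral_2_eq_2)
  qed
qed

lemma root_le_root_if_power_le:
  fixes A B :: real
  assumes "0 < p" "0 < q" "0 \<le> A" "0 \<le> B" "A ^ q \<le> B ^ p"
  shows "root p A \<le> root q B"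
proof -
  have "root p A = root (p * q) (A ^ q)"
    using assms by (simp add: real_root_mult_exp real_root_power_cancel)
  also have "\<dots> \<le> root (p * q) (B ^ p)"
    using assms by simp
  also have "\<dots> = root q B"
    using assms by (simp add: mult.commute[of p q] real_root_mult_exp real_root_power_cancel)
  finally show ?thesis .
qed

definition positive_moment_functional :: "((real \<Rightarrow> real) \<Rightarrow> real) \<Rightarrow> (nat \<Rightarrow> real) \<Rightarrow> bool" where
  "positive_moment_functional L \<mu> \<longleftrightarrow>
     (\<forall>g. (\<forall>t. 0 \<le> g t) \<longrightarrow> 0 \<le> L g) \<and>
     (\<forall>F c. finite F \<longrightarrow> L (\<lambda>t. \<Sum>i\<in>F. c i * t ^ i) = (\<Sum>i\<in>F. c i * \<mu> i))"

lemma positive_moment_functional_nonneg: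
  "positive_moment_functional L \<mu> \<Longrightarrow> (\<And>t. 0 \<le> g t) \<Longrightarrow> 0 \<le> L g"
  by (simp add: positive_moment_functional_def)

lemma positive_moment_functional_polynomial:
  "positive_moment_functional L \<mu> \<Longrightarrow> finite F \<Longrightarrow> L (\<lambda>t. \<Sum>i\<in>F. c i * t ^ i) = (\<Sum>i\<in>F. c i * \<mu> i)"
  by (simp add: positive_moment_functional_def)

lemma positive_moment_functional_even_moment_nonneg:
  assumes "positive_moment_functional L \<mu>"
  shows "0 \<le> \<mu> (2 * i)"
proof -
  have "L (\<lambda>t. \<Sum>k\<in>{2 * i}. 1 * t ^ k) = \<mu> (2 * i)"
    using positive_moment_functional_polynomial[OF assms, of "{2 * i}" "\<lambda>_. 1"] by simp
  moreover have "0 \<le> L (\<lambda>t. \<Sum>k\<in>{2 * i}. 1 * t ^ k)"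
    by (rule positive_moment_functional_nonneg[OF assms]) (simp add: power_mult)
  ultimately show ?thesis
    by simp
qed

lemma positive_moment_functional_cauchy_schwarz:
  assumes "positive_moment_functional L \<mu>"
  shows "(\<mu> (i + j))\<^sup>2 \<le> \<mu> (2 * i) * \<mu> (2 * j)"
proof (cases "i = j")
  case True
  then show ?thesis
    by (simp add: power2_eq_square mult_2)
next
  case False
  then have distinct: "2 * i \<noteq> i + j" "2 * j \<noteq> i + j" "2 * i \<noteq> 2 * j"
    by auto
  have "0 \<le> c\<^sup>2 * \<mu> (2 * i) + 2 * c * d * \<mu> (i + j) + d\<^sup>2 * \<mu> (2 * j)" for c d
  proof -
    define e where "e k = (if k = 2 * i then c\<^sup>2 else if k = i + j then 2 * c * d else d\<^sup>2)" for k
    have "(c * t ^ i + d * t ^ j)\<^sup>2 = c\<^sup>2 * t ^ (2 * i) + 2 * c * d * t ^ (i + j) + d\<^sup>2 * t ^ (2 * j)"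
      for t :: real
    proof -
      have "t ^ (2 * i) = t ^ i * t ^ i" "t ^ (i + j) = t ^ i * t ^ j" "t ^ (2 * j) = t ^ j * t ^ j"
        by (simp_all add: mult_2 power_add)
      then show ?thesis
        by (simp only:) (simp add: power2_eq_square algebra_simps)
    qed
    also have "\<dots> t = (\<Sum>k\<in>{2 * i, i + j, 2 * j}. e k * t ^ k)" for t
      using distinct by (simp add: e_def)
    finally have square: "(c * t ^ i + d * t ^ j)\<^sup>2 = (\<Sum>k\<in>{2 * i, i + j, 2 * j}. e k * t ^ k)" for t .
    have "0 \<le> L (\<lambda>t. \<Sum>k\<in>{2 * i, i + j, 2 * j}. e k * t ^ k)"
      by (rule positive_moment_functional_nonneg[OF assms]) (simp flip: square)
    also have "\<dots> = (\<Sum>k\<in>{2 * i, i + j, 2 * j}. e k * \<mu> k)"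
      by (simp add: positive_moment_functional_polynomial[OF assms])
    also have "\<dots> = c\<^sup>2 * \<mu> (2 * i) + 2 * c * d * \<mu> (i + j) + d\<^sup>2 * \<mu> (2 * j)"
      using distinct by (simp add: e_def)
    finally show ?thesis .
  qed
  then show ?thesis
    by (rule nonneg_quadratic_form_imp_square_le)
qed

definition monomial_exponents :: "'a set \<Rightarrow> nat \<Rightarrow> ('a \<Rightarrow> nat) set" where
  "monomial_exponents I m = {\<alpha>. (\<forall>i. i \<notin> I \<longrightarrow> \<alpha> i = 0) \<and> sum \<alpha> I = m}"

definition complete_hom_on :: "'a set \<Rightarrow> ('a \<Rightarrow> real) \<Rightarrow> nat \<Rightarrow> real" where
  "complete_hom_on I x m = (\<Sum>\<alpha>\<in>monomial_exponents I m. \<Prod>i\<in>I. x i ^ \<alpha> i)"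

definition H_on :: "'a set \<Rightarrow> ('a \<Rightarrow> real) \<Rightarrow> nat \<Rightarrow> real" where
  "H_on I x m = complete_hom_on I x m / real ((card I + m - 1) choose m)"

lemma finite_monomial_exponents:
  assumes "finite I"
  shows "finite (monomial_exponents I m)"
proof (rule finite_subset)
  show "monomial_exponents I m \<subseteq> {\<alpha>. \<forall>i. (i \<in> I \<longrightarrow> \<alpha> i \<in> {..m}) \<and> (i \<notin> I \<longrightarrow> \<alpha> i = 0)}"
    using member_le_sum[OF _ _ assms] by (fastforce simp: monomial_exponents_def)
  show "finite {\<alpha>. \<forall>i. (i \<in> I \<longrightarrow> \<alpha> i \<in> {..m}) \<and> (i \<notin> I \<longrightarrow> (\<alpha> i :: nat) = 0)}"
    by (rule finite_set_of_finite_funs) (use assms in auto)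
qed

lemma complete_hom_on_empty: "complete_hom_on {} (x :: 'a \<Rightarrow> real) m = (if m = 0 then 1 else 0)"
proof -
  have "monomial_exponents ({} :: 'a set) m = (if m = 0 then {\<lambda>_. 0} else {})"
    by (auto simp: monomial_exponents_def)
  then show ?thesis
    by (simp add: complete_hom_on_def)
qed

lemma complete_hom_on_insert:
  assumes "finite I" "a \<notin> I"
  shows "complete_hom_on (insert a I) x m = (\<Sum>j\<le>m. x a ^ (m - j) * complete_hom_on I x j)"
proof -
  let ?E = monomial_exponents
  have sum_upd: "sum (\<alpha>(a := v)) I = sum \<alpha> I" and prod_upd: "(\<Prod>i\<in>I. x i ^ (\<alpha>(a := v)) i) = (\<Prod>i\<in>I. x i ^ \<alpha> i)"
    for \<alpha> :: "'a \<Rightarrow> nat" and v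
    using assms(2) by (auto intro!: sum.cong prod.cong)
  have "complete_hom_on (insert a I) x m = (\<Sum>\<alpha>\<in>?E (insert a I) m. x a ^ \<alpha> a * (\<Prod>i\<in>I. x i ^ \<alpha> i))"
    using assms by (simp add: complete_hom_on_def)
  also have "\<dots> = (\<Sum>(j, \<beta>)\<in>Sigma {..m} (?E I). x a ^ (m - j) * (\<Prod>i\<in>I. x i ^ \<beta> i))"
  proof (rule sum.reindex_bij_witness[where j = "\<lambda>\<alpha>. (m - \<alpha> a, \<alpha>(a := 0))" and i = "\<lambda>(j, \<beta>). \<beta>(a := m - j)"])
    fix \<alpha> assume "\<alpha> \<in> ?E (insert a I) m"
    then have "\<forall>i. i \<notin> insert a I \<longrightarrow> \<alpha> i = 0" "\<alpha> a + sum \<alpha> I = m"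
      using assms by (auto simp: monomial_exponents_def)
    then show "(case (m - \<alpha> a, \<alpha>(a := 0)) of (j, \<beta>) \<Rightarrow> \<beta>(a := m - j)) = \<alpha>"
      and "(m - \<alpha> a, \<alpha>(a := 0)) \<in> Sigma {..m} (?E I)"
      and "(case (m - \<alpha> a, \<alpha>(a := 0)) of (j, \<beta>) \<Rightarrow> x a ^ (m - j) * (\<Prod>i\<in>I. x i ^ \<beta> i))
             = x a ^ \<alpha> a * (\<Prod>i\<in>I. x i ^ \<alpha> i)"
      using sum_upd[of \<alpha> 0] prod_upd[of \<alpha> 0] by (auto simp: monomial_exponents_def)
  next
    fix p assume "p \<in> Sigma {..m} (?E I)"
    then obtain j \<beta> where "p = (j, \<beta>)" "j \<le> m" "\<forall>i. i \<notin> I \<longrightarrow> \<beta> i = 0" "sum \<beta> I = j"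
      by (auto simp: monomial_exponents_def)
    then show "(m - (case p of (j, \<beta>) \<Rightarrow> \<beta>(a := m - j)) a, (case p of (j, \<beta>) \<Rightarrow> \<beta>(a := m - j))(a := 0)) = p"
      and "(case p of (j, \<beta>) \<Rightarrow> \<beta>(a := m - j)) \<in> ?E (insert a I) m"
      using assms sum_upd[of \<beta> "m - j"] by (auto simp: monomial_exponents_def)
  qed
  also have "\<dots> = (\<Sum>j\<le>m. x a ^ (m - j) * complete_hom_on I x j)"
    using assms(1)
    by (simp add: sum.Sigma[symmetric] finite_monomial_exponents complete_hom_on_def sum_distrib_left)
  finally show ?thesis .
qed

lemma H_on_singleton: "H_on {a} x m = x a ^ m"
  using complete_hom_on_insert[of "{}" a x m]
  by (simp add: H_on_def complete_hom_on_empty if_distrib cong: if_cong)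

lemma H_on_0:
  assumes "finite I"
  shows "H_on I x 0 = 1"
  using assms
  by (induction rule: finite_induct) (simp_all add: H_on_def complete_hom_on_empty complete_hom_on_insert)

lemma H_norm_eq_H_on: "H_norm m x = H_on UNIV (\<lambda>i. x $ i) m"
  by (simp add: H_norm_def H_on_def complete_hom_def complete_hom_on_def monomial_exponents_def)

lemma has_integral_H_on_insert:
  assumes "finite I" "I \<noteq> {}" "a \<notin> I"
  shows "((\<lambda>s. real (card I) * s ^ (card I - 1) *
            (\<Sum>j\<le>m. real (m choose j) * s ^ j * ((1 - s) * x a) ^ (m - j) * H_on I x j))
          has_integral H_on (insert a I) x m) {0..1}"
proof -
  obtain l where l: "card I = Suc l"
    using assms by (metis card_0_eq not0_implies_Suc)
  define w where "w j = real (m choose j) * x a ^ (m - j) * H_on I x j * real (Suc l)" for j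
  have "((\<lambda>s. \<Sum>j\<le>m. w j * (s ^ (l + j) * (1 - s) ^ (m - j))) has_integral
          (\<Sum>j\<le>m. w j * (fact (l + j) * fact (m - j) / fact (l + j + (m - j) + 1)))) {0..1}"
    by (intro has_integral_sum has_integral_mult_right has_integral_beta_nat) simp
  moreover have "real (card I) * s ^ (card I - 1) *
      (\<Sum>j\<le>m. real (m choose j) * s ^ j * ((1 - s) * x a) ^ (m - j) * H_on I x j)
      = (\<Sum>j\<le>m. w j * (s ^ (l + j) * (1 - s) ^ (m - j)))" for s
    by (simp add: l w_def sum_distrib_left power_add power_mult_distrib ac_simps)
  moreover have "w j * (fact (l + j) * fact (m - j) / fact (l + j + (m - j) + 1))
      = x a ^ (m - j) * complete_hom_on I x j / real ((Suc l + m) choose m)" if "j \<le> m" for j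
  proof -
    have "w j * (fact (l + j) * fact (m - j) / fact (l + j + (m - j) + 1))
        = x a ^ (m - j) * complete_hom_on I x j / real ((l + j) choose j)
          * (real (m choose j) * real (Suc l) * (fact (l + j) * fact (m - j) / fact (Suc l + m)))"
      using that by (simp add: w_def H_on_def l)
    also have "\<dots> = x a ^ (m - j) * complete_hom_on I x j / real ((l + j) choose j)
          * (real ((l + j) choose j) / real ((Suc l + m) choose m))"
      by (simp only: choose_beta_identity[OF that])
    finally show ?thesis
      by simp
  qed
  then have "(\<Sum>j\<le>m. w j * (fact (l + j) * fact (m - j) / fact (l + j + (m - j) + 1)))
      = H_on (insert a I) x m"
    using assms l by (simp add: H_on_def complete_hom_on_insert sum_divide_distrib)
  ultimately show ?thesis
    by simp
qed

lemma positive_moment_functional_insert: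
  assumes L: "positive_moment_functional L (H_on I x)" and I: "finite I" "I \<noteq> {}" "a \<notin> I"
  shows "positive_moment_functional
           (\<lambda>g. integral {0..1} (\<lambda>s. real (card I) * s ^ (card I - 1) * L (\<lambda>t. g (x a + s * (t - x a)))))
           (H_on (insert a I) x)"
  unfolding positive_moment_functional_def
proof (intro conjI allI impI)
  fix g :: "real \<Rightarrow> real"
  assume "\<forall>t. 0 \<le> g t"
  then have "0 \<le> real (card I) * s ^ (card I - 1) * L (\<lambda>t. g (x a + s * (t - x a)))" if "s \<in> {0..1}" for s
    using that by (simp add: positive_moment_functional_nonneg[OF L])
  then show "0 \<le> integral {0..1} (\<lambda>s. real (card I) * s ^ (card I - 1) * L (\<lambda>t. g (x a + s * (t - x a))))"
    by (cases "(\<lambda>s. real (card I) * s ^ (card I - 1) * L (\<lambda>t. g (x a + s * (t - x a)))) integrable_on {0..1}")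
      (auto intro: Henstock_Kurzweil_Integration.integral_nonneg simp: not_integrable_integral)
next
  fix F :: "nat set" and c :: "nat \<Rightarrow> real"
  assume "finite F"
  then obtain N where N: "F \<subseteq> {..N}"
    by (meson finite_nat_iff_bounded_le)
  let ?e = "\<lambda>s i j. real (i choose j) * s ^ j * ((1 - s) * x a) ^ (i - j)"
  have "L (\<lambda>t. \<Sum>i\<in>F. c i * (x a + s * (t - x a)) ^ i)
        = (\<Sum>i\<in>F. c i * (\<Sum>j\<le>i. ?e s i j * H_on I x j))" for s
  proof -
    have "(\<Sum>i\<in>F. c i * (x a + s * (t - x a)) ^ i) = (\<Sum>i\<in>F. \<Sum>j\<le>N. c i * (?e s i j * t ^ j))" for t
      using N by (intro sum.cong refl) (auto simp: affine_power_expansion sum_distrib_left)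
    also have "\<dots> t = (\<Sum>j\<le>N. (\<Sum>i\<in>F. c i * ?e s i j) * t ^ j)" for t
      by (subst sum.swap) (simp add: sum_distrib_right mult.assoc)
    finally have "(\<lambda>t. \<Sum>i\<in>F. c i * (x a + s * (t - x a)) ^ i) = (\<lambda>t. \<Sum>j\<le>N. (\<Sum>i\<in>F. c i * ?e s i j) * t ^ j)"
      by (rule ext)
    then have "L (\<lambda>t. \<Sum>i\<in>F. c i * (x a + s * (t - x a)) ^ i)
        = (\<Sum>j\<le>N. (\<Sum>i\<in>F. c i * ?e s i j) * H_on I x j)"
      by (simp add: positive_moment_functional_polynomial[OF L])
    also have "\<dots> = (\<Sum>i\<in>F. c i * (\<Sum>j\<le>N. ?e s i j * H_on I x j))"
      unfolding sum_distrib_left sum_distrib_right by (subst sum.swap) (simp add: mult.assoc)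
    also have "\<dots> = (\<Sum>i\<in>F. c i * (\<Sum>j\<le>i. ?e s i j * H_on I x j))"
      using N by (intro sum.cong refl arg_cong2[where f = "(*)"] sum.mono_neutral_right) auto
    finally show ?thesis .
  qed
  then have integrand: "real (card I) * s ^ (card I - 1) * L (\<lambda>t. \<Sum>i\<in>F. c i * (x a + s * (t - x a)) ^ i)
      = (\<Sum>i\<in>F. c i * (real (card I) * s ^ (card I - 1) * (\<Sum>j\<le>i. ?e s i j * H_on I x j)))" for s
    by (simp add: sum_distrib_left mult.left_commute)
  have "((\<lambda>s. \<Sum>i\<in>F. c i * (real (card I) * s ^ (card I - 1) * (\<Sum>j\<le>i. ?e s i j * H_on I x j)))
      has_integral (\<Sum>i\<in>F. c i * H_on (insert a I) x i)) {0..1}"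
    using I by (intro has_integral_sum has_integral_mult_right has_integral_H_on_insert) (simp_all add: \<open>finite F\<close>)
  then show "integral {0..1} (\<lambda>s. real (card I) * s ^ (card I - 1) * L (\<lambda>t. \<Sum>i\<in>F. c i * (x a + s * (t - x a)) ^ i))
      = (\<Sum>i\<in>F. c i * H_on (insert a I) x i)"
    unfolding integrand by (rule integral_unique)
qed

lemma positive_moment_functional_H_on:
  assumes "finite I" "I \<noteq> {}"
  shows "\<exists>L. positive_moment_functional L (H_on I x)"
  using assms
proof (induction rule: finite_ne_induct)
  case (singleton a)
  have "positive_moment_functional (\<lambda>g. g (x a)) (H_on {a} x)"
    by (simp add: positive_moment_functional_def H_on_singleton)
  then show ?case
    by blast
next
  case (insert a I)
  then obtain L where "positive_moment_functional L (H_on I x)"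
    by blast
  then show ?case
    using positive_moment_functional_insert[OF _ insert.hyps] by blast
qed

theorem mainTheorem10:
  fixes x :: "real ^ 'n" and k :: nat
  assumes "k \<ge> 2"
  shows "root (2*k - 2) (H_norm (2*k - 2) x) \<le> root (2*k) (H_norm (2*k) x)"
proof -
  obtain L where L: "positive_moment_functional L (H_on UNIV (\<lambda>i. x $ i))"
    using positive_moment_functional_H_on[of "UNIV :: 'n set"] by auto
  define a where "a j = H_norm (2 * j) x" for j
  have a: "a j = H_on UNIV (\<lambda>i. x $ i) (2 * j)" for j
    by (simp add: a_def H_norm_eq_H_on)
  have nonneg: "0 \<le> a j" for j
    unfolding a by (rule positive_moment_functional_even_moment_nonneg[OF L])
  have "(a (j + 1))\<^sup>2 \<le> a j * a (j + 2)" for j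
    using positive_moment_functional_cauchy_schwarz[OF L, of j "j + 2"] by (simp add: a mult_2)
  moreover have "a 0 = 1"
    by (simp add: a H_on_0)
  ultimately have "a (k - 1) ^ k \<le> a k ^ (k - 1)"
    using log_convex_power_le[of a "k - 1"] nonneg assms by simp
  then have "(a (k - 1) ^ k)\<^sup>2 \<le> (a k ^ (k - 1))\<^sup>2"
    using nonneg by (simp add: power_mono)
  then have "a (k - 1) ^ (2 * k) \<le> a k ^ (2 * k - 2)"
    using assms by (simp flip: power_mult add: mult.commute right_diff_distrib')
  moreover have "H_norm (2 * k - 2) x = a (k - 1)"
    using assms by (simp add: a_def right_diff_distrib')
  ultimately show ?thesis
    using assms nonneg by (intro root_le_root_if_power_le) (simp_all add: a_def)
qed

end
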